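(* Let $S$ be a numerical semigroup with $\mathrm{g}(S)=g\ge 1$ and $\mathrm{m}(S)=a$. Let $q=\lfloor g/a\rfloor$ and $r=g-aq$. Then $S$ is reflective if and only if $a\in\{2,3,\dots,g+1\}$, $a\nmid g$, and \[ S=\langle A\rangle \quad\text{for}\quad A=\{a,\ 2g+a-r\}\cup\{g+1,g+2,\dots,g+(a-1)\}. \]
   Context: A numerical semigroup is a submonoid $S$ of $(\mathbb{N}_0,+)$ with finite complement. Its set of gaps is $\mathrm{H}(S)=\mathbb{N}_0\setminus S$, its genus is $\mathrm{g}(S)=\#\mathrm{H}(S)$, its Frobenius number (when $\mathrm{g}(S)\ge1$) is $\mathrm{F}(S)=\max \mathrm{H}(S)$, and its multiplicity $\mathrm{m}(S)$ is the smallest positive element of $S$. For $A\subseteq\mathbb{N}_0$, $\langle A\rangle$ denotes the set of all finite $\mathbb{N}_0$-linear combinations of elements of $A$. A numerical semigroup $S$ of genus $g\ge1$ is called reflective if for every $z\in\{0,1,\dots,g-1\}$ exactly one of $z$ and $z+g$ belongs to $S$. *)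

theory Defs
  imports Main
begin

definition numerical_semigroup :: "nat set \<Rightarrow> bool" where
  "numerical_semigroup S \<longleftrightarrow> 0 \<in> S \<and> (\<forall>x\<in>S. \<forall>y\<in>S. x + y \<in> S) \<and> finite (UNIV - S)"

definition gaps :: "nat set \<Rightarrow> nat set" where
  "gaps S = UNIV - S"

definition genus :: "nat set \<Rightarrow> nat" where
  "genus S = card (gaps S)"

definition multiplicity :: "nat set \<Rightarrow> nat" where
  "multiplicity S = (LEAST x. x \<in> S \<and> 0 < x)"

inductive_set generated :: "nat set \<Rightarrow> nat set" for A :: "nat set" where
  gen_zero: "0 \<in> generated A"
| gen_add: "a \<in> A \<Longrightarrow> x \<in> generated A \<Longrightarrow> a + x \<in> generated A"

definition reflective :: "nat set \<Rightarrow> bool" where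
  "reflective S \<longleftrightarrow> 1 \<le> genus S \<and>
     (\<forall>z < genus S. (z \<in> S) \<noteq> (z + genus S \<in> S))"

end

theory Submission
  imports Defs
begin

text \<open>
  Pairing each z < g with whichever of z, z + g is a gap is an injection into the g gaps,
  hence a bijection; so every n \<ge> 2g lies in S. Below g the elements of S are exactly the
  multiples of the multiplicity a (if n < g were in S with a \<not> dvd n, then
  (n div a) a + (n mod a + g) = n + g would be in S as well, since n mod a is a gap), and
  between g and 2g membership is the negation of the membership of n - g. So S is determined by
  a and g, and that set is generated by a, g + 1, ..., g + a - 1 and
  2g + a - r = g + a(q + 1), the first multiple of a shifted by g that is \<ge> 2g.
\<close>

definition reflective_set :: "nat \<Rightarrow> nat \<Rightarrow> nat set" where
  "reflective_set a g =
     {n. (n < g \<and> a dvd n) \<or> (g \<le> n \<and> n < 2*g \<and> \<not> a dvd (n - g)) \<or> 2*g \<le> n}"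

lemma reflective_set_shift_iff:
  "z < g \<Longrightarrow> (z \<in> reflective_set a g) \<noteq> (z + g \<in> reflective_set a g)"
  by (auto simp: reflective_set_def)

lemma reflective_set_add_closed:
  assumes "\<not> a dvd g" "x \<in> reflective_set a g" "y \<in> reflective_set a g"
  shows "x + y \<in> reflective_set a g"
proof -
  have "\<not> a dvd (x + y - g)" if "x < g" "y < g" "a dvd x" "a dvd y" "g \<le> x + y"
  proof
    assume "a dvd (x + y - g)"
    moreover have "x + y - (x + y - g) = g" using that by simp
    ultimately show False using assms(1) that dvd_diff_nat dvd_add by metis
  qed
  moreover have mixed: "\<not> a dvd (x + y - g)"
    if "x < g" "a dvd x" "g \<le> y" "\<not> a dvd (y - g)" for x y
  proof
    assume "a dvd (x + y - g)"
    moreover have "x + y - g - x = y - g" using that by simp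
    ultimately show False using that dvd_diff_nat by metis
  qed
  ultimately show ?thesis
    using assms(2,3) mixed[of y x] unfolding reflective_set_def by (auto simp: add.commute)
qed

lemma generated_add_mult:
  assumes "a \<in> A" "x \<in> generated A"
  shows "k * a + x \<in> generated A"
proof (induction k)
  case 0
  then show ?case using assms(2) by simp
next
  case (Suc k)
  have "a + (k * a + x) \<in> generated A" using assms(1) Suc by (rule gen_add)
  then show ?case by (simp add: add.assoc)
qed

lemma generated_mult: "a \<in> A \<Longrightarrow> k * a \<in> generated A"
  using generated_add_mult[OF _ gen_zero] by fastforce

lemma generator_mem_generated: "a \<in> A \<Longrightarrow> a \<in> generated A"
  using generated_mult[of a A 1] by simp

lemma generated_subsetI:
  assumes "A \<subseteq> S" "0 \<in> S" "\<And>x y. x \<in> S \<Longrightarrow> y \<in> S \<Longrightarrow> x + y \<in> S"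
  shows "generated A \<subseteq> S"
proof
  fix x assume "x \<in> generated A"
  then show "x \<in> S" by induction (use assms in auto)
qed

context
  fixes a g :: nat
  assumes a_ge_2: "2 \<le> a" and a_le: "a \<le> g + 1" and not_dvd: "\<not> a dvd g"
begin

abbreviation reflective_generators :: "nat set" where
  "reflective_generators \<equiv> {a, 2*g + a - g mod a} \<union> {g+1..g+(a-1)}"

lemma reflective_generators_subset: "reflective_generators \<subseteq> reflective_set a g"
proof -
  have "a \<in> reflective_set a g"
    using a_le not_dvd a_ge_2 by (cases "a < g") (auto simp: reflective_set_def le_Suc_eq)
  moreover have "g mod a < a" using a_ge_2 by simp
  then have "2*g + a - g mod a \<in> reflective_set a g" by (auto simp: reflective_set_def)
  moreover have "n \<in> reflective_set a g" if "g + 1 \<le> n" "n \<le> g + (a - 1)" for n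
  proof -
    have "\<not> a dvd (n - g)" using that by (auto dest: dvd_imp_le)
    then show ?thesis using that by (auto simp: reflective_set_def)
  qed
  ultimately show ?thesis by auto
qed

lemma shifted_non_multiple_mem_generated:
  assumes "\<not> a dvd z"
  shows "g + z \<in> generated reflective_generators"
proof -
  have "0 < z mod a" "z mod a < a" using assms a_ge_2 by (auto simp: mod_greater_zero_iff_not_dvd)
  then have "g + z mod a \<in> generated reflective_generators"
    by (intro generator_mem_generated) auto
  from generated_add_mult[OF _ this, of a "z div a"] show ?thesis by (simp add: add.commute)
qed

text \<open>Since a does not divide g, z \<ge> g forces z \<ge> a (g div a + 1).\<close>

lemma shifted_multiple_mem_generated:
  assumes "a dvd z" "g \<le> z"
  shows "g + z \<in> generated reflective_generators"
proof -
  define q r where "q = g div a" and "r = g mod a"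
  have g: "g = a * q + r" and "0 < r" "r < a"
    using a_ge_2 not_dvd by (simp_all add: q_def r_def mod_greater_zero_iff_not_dvd)
  obtain k where k: "z = a * k" using assms(1) by (auto elim: dvdE)
  have "q < k"
  proof (rule ccontr)
    assume "\<not> q < k"
    then have "a * k \<le> a * q" by simp
    then show False using assms(2) k g \<open>0 < r\<close> by linarith
  qed
  define m where "m = k - (q + 1)"
  with \<open>q < k\<close> have "k = m + (q + 1)" by simp
  then have "g + z = m * a + (g + a * (q + 1))" using k by (simp add: distrib_left mult.commute)
  moreover have "g + a * (q + 1) = 2*g + a - g mod a"
    using g \<open>r < a\<close> unfolding r_def[symmetric] by (simp add: distrib_left)
  ultimately have "g + z = m * a + (2*g + a - g mod a)" by simp
  moreover have "2*g + a - g mod a \<in> generated reflective_generators"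
    by (rule generator_mem_generated) simp
  ultimately show ?thesis using generated_add_mult[of a] by simp
qed

lemma generated_reflective_generators: "generated reflective_generators = reflective_set a g"
proof
  show "generated reflective_generators \<subseteq> reflective_set a g"
    using reflective_generators_subset reflective_set_add_closed[OF not_dvd]
    by (intro generated_subsetI) (auto simp: reflective_set_def)
  show "reflective_set a g \<subseteq> generated reflective_generators"
  proof
    fix n assume n: "n \<in> reflective_set a g"
    show "n \<in> generated reflective_generators"
    proof (cases "n < g")
      case True
      then have "a dvd n" using n by (simp add: reflective_set_def)
      then obtain k where "n = k * a" by (metis dvd_def mult.commute)
      then show ?thesis using generated_mult[of a] by simp
    next
      case False
      then have "n = g + (n - g)" by simp
      moreover have "\<not> a dvd (n - g) \<or> g \<le> n - g" using n False by (auto simp: reflective_set_def)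
      ultimately show ?thesis
        using shifted_non_multiple_mem_generated shifted_multiple_mem_generated by metis
    qed
  qed
qed

end

lemma numerical_semigroup_mult_closed:
  assumes "numerical_semigroup S" "a \<in> S"
  shows "k * a \<in> S"
  using assms by (induction k) (auto simp: numerical_semigroup_def)

lemma multiplicity_mem:
  assumes "numerical_semigroup S"
  shows "multiplicity S \<in> S" "0 < multiplicity S"
proof -
  have "finite (UNIV - S)" using assms by (simp add: numerical_semigroup_def)
  then obtain m where "\<forall>n \<in> UNIV - S. n < m" by (auto simp: finite_nat_set_iff_bounded)
  then have "Suc m \<in> S" "0 < Suc m" by (auto dest: bspec[of _ _ "Suc m"])
  then obtain n where "n \<in> S" "0 < n" by blast
  then show "multiplicity S \<in> S" "0 < multiplicity S"
    using LeastI[of "\<lambda>x. x \<in> S \<and> 0 < x"] by (auto simp: multiplicity_def)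
qed

lemma not_mem_below_multiplicity: "0 < n \<Longrightarrow> n < multiplicity S \<Longrightarrow> n \<notin> S"
  unfolding multiplicity_def using not_less_Least by blast

context
  fixes S :: "nat set" and g :: nat
  assumes ns: "numerical_semigroup S" and refl: "reflective S" and genus: "genus S = g"
begin

lemma reflective_shift_iff: "z < g \<Longrightarrow> (z \<in> S) \<noteq> (z + g \<in> S)"
  using refl genus by (simp add: reflective_def)

lemma reflective_mem_if_ge_twice_genus:
  assumes "2*g \<le> n"
  shows "n \<in> S"
proof (rule ccontr)
  assume "n \<notin> S"
  define f where "f z = (if z \<in> S then z + g else z)" for z
  have "inj_on f {..<g}" by (auto simp: inj_on_def f_def)
  then have "card (f ` {..<g}) = card (gaps S)"
    using genus by (simp add: card_image genus_def)
  moreover have "finite (gaps S)" using ns by (simp add: numerical_semigroup_def gaps_def)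
  moreover have "f ` {..<g} \<subseteq> gaps S"
    using reflective_shift_iff by (auto simp: f_def gaps_def)
  ultimately have "f ` {..<g} = gaps S" by (simp add: card_subset_eq)
  then obtain z where "z < g" "n = f z" using \<open>n \<notin> S\<close> by (auto simp: gaps_def)
  then show False using assms by (auto simp: f_def split: if_splits)
qed

lemma reflective_mem_below_genus_iff:
  assumes "n < g"
  shows "n \<in> S \<longleftrightarrow> multiplicity S dvd n"
proof
  let ?a = "multiplicity S"
  assume "n \<in> S"
  show "?a dvd n"
  proof (rule ccontr)
    assume "\<not> ?a dvd n"
    then have "0 < n mod ?a" "n mod ?a < ?a" using multiplicity_mem[OF ns]
      by (auto simp: mod_greater_zero_iff_not_dvd)
    moreover have "n mod ?a < g" using assms mod_less_eq_dividend[of n ?a] by linarith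
    ultimately have "n mod ?a + g \<in> S"
      using reflective_shift_iff not_mem_below_multiplicity by blast
    moreover have "(n div ?a) * ?a \<in> S" using numerical_semigroup_mult_closed ns multiplicity_mem by blast
    ultimately have "(n div ?a) * ?a + (n mod ?a + g) \<in> S"
      using ns unfolding numerical_semigroup_def by blast
    then have "n + g \<in> S" by (simp add: add.assoc[symmetric])
    then show False using reflective_shift_iff[OF assms] \<open>n \<in> S\<close> by simp
  qed
next
  assume "multiplicity S dvd n"
  then obtain k where "n = k * multiplicity S" by (metis dvd_def mult.commute)
  then show "n \<in> S" using numerical_semigroup_mult_closed[OF ns multiplicity_mem(1)[OF ns]] by simp
qed

lemma reflective_eq_reflective_set: "S = reflective_set (multiplicity S) g"
proof (rule set_eqI)
  fix n
  have "n \<in> S \<longleftrightarrow> \<not> multiplicity S dvd (n - g)" if "g \<le> n" "n < 2*g"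
    using that reflective_shift_iff[of "n - g"] reflective_mem_below_genus_iff[of "n - g"] by simp
  then show "n \<in> S \<longleftrightarrow> n \<in> reflective_set (multiplicity S) g"
    using reflective_mem_below_genus_iff reflective_mem_if_ge_twice_genus
    by (cases "n < g"; cases "n < 2*g") (auto simp: reflective_set_def)
qed

lemma reflective_multiplicity_bounds:
  "2 \<le> multiplicity S" "multiplicity S \<le> g + 1" "\<not> multiplicity S dvd g"
proof -
  let ?a = "multiplicity S"
  have "1 \<le> g" using refl genus by (simp add: reflective_def)
  then have "g \<notin> S" using reflective_shift_iff[of 0] ns by (simp add: numerical_semigroup_def)
  then show "\<not> ?a dvd g"
    using numerical_semigroup_mult_closed[OF ns multiplicity_mem(1)[OF ns]]
    by (metis dvd_def mult.commute)
  then show "2 \<le> ?a" using multiplicity_mem(2)[OF ns] by (cases "?a = 1") auto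
  then have "g + 1 \<in> reflective_set ?a g"
    using \<open>1 \<le> g\<close> by (auto simp: reflective_set_def dvd_1_iff_1)
  then have "g + 1 \<in> S" by (simp only: reflective_eq_reflective_set[symmetric])
  then show "?a \<le> g + 1" using not_mem_below_multiplicity[of "g + 1" S] by force
qed

end

theorem mainTheorem1:
  fixes S :: "nat set" and g a q r :: nat
  assumes "numerical_semigroup S"
    and "genus S = g" and "g \<ge> 1"
    and "multiplicity S = a"
    and "q = g div a" and "r = g - a * q"
  shows "reflective S \<longleftrightarrow>
     (a \<in> {2..g+1} \<and> \<not> a dvd g \<and>
      S = generated ({a, 2*g + a - r} \<union> {g+1..g+(a-1)}))"
proof -
  have "r = g mod a" using assms(5,6) by (simp add: minus_mult_div_eq_mod mult.commute)
  then have generated_eq: "a \<in> {2..g+1} \<Longrightarrow> \<not> a dvd g \<Longrightarrow>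
      generated ({a, 2*g + a - r} \<union> {g+1..g+(a-1)}) = reflective_set a g"
    using generated_reflective_generators by simp
  show ?thesis
  proof
    assume "reflective S"
    note bounds = reflective_multiplicity_bounds[OF assms(1) this assms(2), unfolded assms(4)]
    note S_eq = reflective_eq_reflective_set[OF assms(1) \<open>reflective S\<close> assms(2), unfolded assms(4)]
    show "a \<in> {2..g+1} \<and> \<not> a dvd g \<and> S = generated ({a, 2*g + a - r} \<union> {g+1..g+(a-1)})"
      using bounds S_eq generated_eq by simp
  next
    assume "a \<in> {2..g+1} \<and> \<not> a dvd g \<and> S = generated ({a, 2*g + a - r} \<union> {g+1..g+(a-1)})"
    then have "S = reflective_set a g" using generated_eq by simp
    then show "reflective S"
      using reflective_set_shift_iff assms(2,3) by (simp add: reflective_def)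
  qed
qed

end
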